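(* Let $n\ge0$ be an integer. In the polynomial ring $\mathbb C[\alpha_2,\alpha_3]$ with the monomial order described below, the leading term ideal of the ideal $I^0_n:=(\zeta_n,\zeta_{n+1},\overline\zeta_{n+1},\overline\zeta_{n+2})$ contains every monomial $\alpha_2^i\alpha_3^j$ with $2i+3j\ge 2n$.
   Context: The polynomials $\zeta_n,\overline\zeta_n\in\mathbb C[\alpha_2,\alpha_3]$ are defined by $\sum_{n\ge0}\zeta_nt^n=\exp(\alpha_2t+\alpha_3t^2/2)$ and $\sum_{n\ge0}\overline\zeta_nt^n=\exp(\alpha_2t-\alpha_3t^2/2)$; explicitly $\zeta_n=\sum_{0\le j\le n/2}\frac{\alpha_2^{n-2j}\alpha_3^j}{(n-2j)!\,j!\,2^j}$ and $\overline\zeta_n=\sum_{0\le j\le n/2}\frac{(-1)^j\alpha_2^{n-2j}\alpha_3^j}{(n-2j)!\,j!\,2^j}$. The monomial order is graded reverse lexicographic with $\deg\alpha_2=2$, $\deg\alpha_3=4$: $\alpha_2^i\alpha_3^j>\alpha_2^{i'}\alpha_3^{j'}$ if $2i+4j>2i'+4j'$, or if $2i+4j=2i'+4j'$ and the right-most nonzero entry of $(i-i',j-j')$ is negative. The leading term ideal of an ideal is the ideal generated by the leading monomials of its elements. *)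

theory Defs
  imports Complex_Main "HOL-Computational_Algebra.Polynomial"
begin

text \<open>C[alpha2, alpha3] is represented as complex poly poly: the outer variable is alpha3,
the inner one alpha2. The coefficient of alpha2^i alpha3^j in p is coeff (coeff p j) i.\<close>

type_synonym cpoly2 = "complex poly poly"

definition mon :: "nat \<Rightarrow> nat \<Rightarrow> cpoly2" where
  "mon i j = monom (monom 1 i) j"

definition cf :: "cpoly2 \<Rightarrow> nat \<Rightarrow> nat \<Rightarrow> complex" where
  "cf p i j = coeff (coeff p j) i"

definition supp2 :: "cpoly2 \<Rightarrow> (nat \<times> nat) set" where
  "supp2 p = {(i, j). cf p i j \<noteq> 0}"

definition zeta :: "nat \<Rightarrow> cpoly2" where
  "zeta n = (\<Sum>j\<le>n div 2. monom (monom (1 / (fact (n - 2*j) * fact j * 2 ^ j)) (n - 2*j)) j)"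

definition zetabar :: "nat \<Rightarrow> cpoly2" where
  "zetabar n = (\<Sum>j\<le>n div 2. monom (monom ((-1) ^ j / (fact (n - 2*j) * fact j * 2 ^ j)) (n - 2*j)) j)"

text \<open>Graded reverse lexicographic order, deg alpha2 = 2, deg alpha3 = 4:
 (i,j) > (i',j') iff 2i+4j > 2i'+4j', or equal weight and the right-most nonzero
 entry of (i-i', j-j') is negative.\<close>
definition mono_gt :: "nat \<times> nat \<Rightarrow> nat \<times> nat \<Rightarrow> bool" where
  "mono_gt m m' = (case m of (i, j) \<Rightarrow> case m' of (i', j') \<Rightarrow>
      2*i + 4*j > 2*i' + 4*j' \<or>
      (2*i + 4*j = 2*i' + 4*j' \<and>
        (if int j - int j' \<noteq> 0 then int j - int j' < 0 else int i - int i' < 0)))"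

definition lead_mono :: "cpoly2 \<Rightarrow> nat \<times> nat" where
  "lead_mono p = (THE m. m \<in> supp2 p \<and> (\<forall>m'\<in>supp2 p. m' \<noteq> m \<longrightarrow> mono_gt m m'))"

definition ideal_gen :: "cpoly2 set \<Rightarrow> cpoly2 set" where
  "ideal_gen S = {(\<Sum>k<N. c k * g k) | (N::nat) (c::nat \<Rightarrow> cpoly2) (g::nat \<Rightarrow> cpoly2). \<forall>k<N. g k \<in> S}"

definition lead_term_ideal :: "cpoly2 set \<Rightarrow> cpoly2 set" where
  "lead_term_ideal I = ideal_gen {mon (fst (lead_mono f)) (snd (lead_mono f)) | f. f \<in> I \<and> f \<noteq> 0}"

definition I0 :: "nat \<Rightarrow> cpoly2 set" where
  "I0 n = ideal_gen {zeta n, zeta (n+1), zetabar (n+1), zetabar (n+2)}"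

end

theory Submission
  imports Defs
begin

text \<open>
  All monomials \<open>\<alpha>\<^sub>2\<^sup>i \<alpha>\<^sub>3\<^sup>j\<close> of \<open>\<zeta>\<^sub>N\<close> and \<open>\<zeta>bar\<^sub>N\<close> satisfy \<open>i + 2j = N\<close>, and the recurrences
  \<open>(N+2) \<zeta>\<^sub>N\<^sub>+\<^sub>2 = \<alpha>\<^sub>2 \<zeta>\<^sub>N\<^sub>+\<^sub>1 \<plusminus> \<alpha>\<^sub>3 \<zeta>\<^sub>N\<close> (sign \<open>+\<close> for \<open>\<zeta>\<close>, \<open>-\<close> for \<open>\<zeta>bar\<close>) put
  \<open>\<zeta>\<^sub>N\<close> for \<open>N \<ge> n\<close> and \<open>\<zeta>bar\<^sub>N\<close> for \<open>N > n\<close> into \<open>I\<^sup>0\<^sub>n\<close>.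
  Fix \<open>(p, j)\<close> with \<open>2p + 3j \<ge> 2n\<close>, let \<open>M = p + 2j\<close> and \<open>m = M - n\<close>. In \<open>\<alpha>\<^sub>2\<^sup>i \<zeta>\<^sub>M\<^sub>-\<^sub>i\<close>
  the coefficient of \<open>\<alpha>\<^sub>2\<^sup>x \<alpha>\<^sub>3\<^sup>k\<close> (\<open>x + 2k = M\<close>) is the falling factorial \<open>x(x-1)\<dots>(x-i+1)\<close>
  divided by \<open>x! k! 2\<^sup>k\<close>, and for \<open>\<zeta>bar\<close> it gets the extra sign \<open>(-1)\<^sup>k\<close>. So combinations
  \<open>\<Sum>\<^sub>i\<^sub>\<le>\<^sub>m \<alpha>\<^sub>2\<^sup>i (a\<^sub>i \<zeta>\<^sub>M\<^sub>-\<^sub>i + b\<^sub>i \<zeta>bar\<^sub>M\<^sub>-\<^sub>i)\<close> with \<open>b\<^sub>m = 0\<close> realise, up to that factor, any two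
  polynomials in \<open>x\<close> of degree \<open>\<le> m\<close> with equal \<open>x\<^sup>m\<close>-coefficients, one on the monomials with
  \<open>k\<close> even and one on those with \<open>k\<close> odd. As \<open>\<lceil>j/2\<rceil> \<le> m\<close>, both can be taken monic of degree
  \<open>\<lceil>j/2\<rceil>\<close>, vanishing at \<open>x = M - 2k\<close> for every \<open>k < j\<close> of their parity but not at \<open>x = p\<close>.
  The resulting element of \<open>I\<^sup>0\<^sub>n\<close> has leading monomial \<open>\<alpha>\<^sub>2\<^sup>p \<alpha>\<^sub>3\<^sup>j\<close>.
\<close>

text \<open>The coefficient of \<open>t\<^sup>n\<close> in \<open>exp (\<alpha>\<^sub>2 t + \<sigma> \<alpha>\<^sub>3 t\<^sup>2 / 2)\<close>.\<close>

definition zeta_gen :: "complex \<Rightarrow> nat \<Rightarrow> cpoly2" where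
  "zeta_gen \<sigma> n = (\<Sum>j\<le>n div 2. monom (monom (\<sigma> ^ j / (fact (n - 2*j) * fact j * 2 ^ j)) (n - 2*j)) j)"

lemma zeta_eq_zeta_gen: "zeta n = zeta_gen 1 n"
  by (simp add: zeta_def zeta_gen_def)

lemma zetabar_eq_zeta_gen: "zetabar n = zeta_gen (-1) n"
  by (simp add: zetabar_def zeta_gen_def)

lemma cf_eqI: "(\<And>i j. cf p i j = cf q i j) \<Longrightarrow> p = q"
  unfolding cf_def by (metis poly_eqI)

lemma cf_zero [simp]: "cf 0 i j = 0"
  by (simp add: cf_def)

lemma cf_add [simp]: "cf (p + q) i j = cf p i j + cf q i j"
  by (simp add: cf_def)

lemma cf_sum: "cf (\<Sum>x\<in>A. p x) i j = (\<Sum>x\<in>A. cf (p x) i j)"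
  by (simp add: cf_def coeff_sum)

lemma cf_monom_mult:
  "cf (monom (monom c a) b * p) i j = (if a \<le> i \<and> b \<le> j then c * cf p (i - a) (j - b) else 0)"
  by (auto simp: cf_def coeff_monom_mult)

lemma cf_zeta_gen:
  "cf (zeta_gen \<sigma> n) i j = (if i + 2*j = n then \<sigma> ^ j / (fact i * fact j * 2 ^ j) else 0)"
proof -
  have "cf (zeta_gen \<sigma> n) i j =
      (\<Sum>j'\<le>n div 2. if j' = j then
         (if n - 2*j' = i then \<sigma> ^ j' / (fact (n - 2*j') * fact j' * 2 ^ j') else 0) else 0)"
    unfolding cf_def zeta_gen_def coeff_sum by (rule sum.cong) auto
  also have "\<dots> = (if i + 2*j = n then \<sigma> ^ j / (fact i * fact j * 2 ^ j) else 0)"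
    by auto
  finally show ?thesis .
qed

lemma zeta_coeff_Suc_left:
  "of_nat (Suc i) * (\<sigma> ^ j / (fact (Suc i) * fact j * 2 ^ j)) = \<sigma> ^ j / (fact i * fact j * 2 ^ j :: complex)"
  by (simp del: of_nat_Suc)

lemma zeta_coeff_Suc_right:
  "2 * of_nat (Suc j) * (\<sigma> ^ Suc j / (fact i * fact (Suc j) * 2 ^ Suc j))
     = \<sigma> * (\<sigma> ^ j / (fact i * fact j * 2 ^ j :: complex))"
  by (simp del: of_nat_Suc)

lemma zeta_gen_recurrence:
  "monom (monom (of_nat (n + 2)) 0) 0 * zeta_gen \<sigma> (n + 2)
     = mon 1 0 * zeta_gen \<sigma> (n + 1) + monom (monom \<sigma> 0) 1 * zeta_gen \<sigma> n"
proof (rule cf_eqI)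
  fix i j
  show "cf (monom (monom (of_nat (n + 2)) 0) 0 * zeta_gen \<sigma> (n + 2)) i j =
        cf (mon 1 0 * zeta_gen \<sigma> (n + 1) + monom (monom \<sigma> 0) 1 * zeta_gen \<sigma> n) i j"
  proof (cases "i + 2*j = n + 2")
    case True
    let ?c = "\<lambda>i j. \<sigma> ^ j / (fact i * fact j * 2 ^ j :: complex)"
    have "of_nat (n + 2) = (of_nat i + 2 * of_nat j :: complex)"
      using True by (metis of_nat_add of_nat_mult of_nat_numeral)
    then have "of_nat (n + 2) * ?c i j = of_nat i * ?c i j + 2 * of_nat j * ?c i j"
      by (simp only: distrib_right)
    also have "\<dots> = (if 1 \<le> i then ?c (i - 1) j else 0) + (if 1 \<le> j then \<sigma> * ?c i (j - 1) else 0)"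
    proof -
      have "of_nat i * ?c i j = (if 1 \<le> i then ?c (i - 1) j else 0)"
        using zeta_coeff_Suc_left by (cases i) simp_all
      moreover have "2 * of_nat j * ?c i j = (if 1 \<le> j then \<sigma> * ?c i (j - 1) else 0)"
        using zeta_coeff_Suc_right by (cases j) simp_all
      ultimately show ?thesis by simp
    qed
    finally show ?thesis
      using True by (auto simp: mon_def cf_monom_mult cf_zeta_gen)
  next
    case False
    then show ?thesis by (auto simp: mon_def cf_monom_mult cf_zeta_gen)
  qed
qed

lemma ideal_gen_generator: "g \<in> S \<Longrightarrow> g \<in> ideal_gen S"
  unfolding ideal_gen_def
  by (rule CollectI, rule exI[of _ 1], rule exI[of _ "\<lambda>_. 1"], rule exI[of _ "\<lambda>_. g"]) simp

lemma ideal_gen_zero: "0 \<in> ideal_gen S"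
  unfolding ideal_gen_def by (rule CollectI, rule exI[of _ 0]) simp

lemma ideal_gen_add:
  assumes "x \<in> ideal_gen S" "y \<in> ideal_gen S"
  shows "x + y \<in> ideal_gen S"
proof -
  obtain N1 :: nat and c1 g1 where x: "x = (\<Sum>k<N1. c1 k * g1 k)" "\<forall>k<N1. g1 k \<in> S"
    using assms(1) unfolding ideal_gen_def mem_Collect_eq by blast
  obtain N2 :: nat and c2 g2 where y: "y = (\<Sum>k<N2. c2 k * g2 k)" "\<forall>k<N2. g2 k \<in> S"
    using assms(2) unfolding ideal_gen_def mem_Collect_eq by blast
  define c where "c k = (if k < N1 then c1 k else c2 (k - N1))" for k
  define g where "g k = (if k < N1 then g1 k else g2 (k - N1))" for k
  have "(\<Sum>k<N1 + N. c k * g k) = x + (\<Sum>k<N. c2 k * g2 k)" for N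
    by (induction N) (simp_all add: x c_def g_def add.assoc)
  then have "x + y = (\<Sum>k<N1 + N2. c k * g k)"
    using y by simp
  moreover have "\<forall>k<N1 + N2. g k \<in> S"
    using x y unfolding g_def by auto
  ultimately show ?thesis
    unfolding ideal_gen_def mem_Collect_eq by blast
qed

lemma ideal_gen_mult:
  assumes "x \<in> ideal_gen S"
  shows "r * x \<in> ideal_gen S"
proof -
  obtain N :: nat and c g where x: "x = (\<Sum>k<N. c k * g k)" "\<forall>k<N. g k \<in> S"
    using assms unfolding ideal_gen_def mem_Collect_eq by blast
  then have "r * x = (\<Sum>k<N. (r * c k) * g k)"
    by (simp add: sum_distrib_left mult.assoc)
  with x(2) show ?thesis
    unfolding ideal_gen_def mem_Collect_eq by (intro exI[of _ N] exI[of _ "\<lambda>k. r * c k"] exI[of _ g]) simp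
qed

lemma ideal_gen_sum: "(\<And>i. i \<in> A \<Longrightarrow> f i \<in> ideal_gen S) \<Longrightarrow> sum f A \<in> ideal_gen S"
  by (induction A rule: infinite_finite_induct) (simp_all add: ideal_gen_zero ideal_gen_add)

lemma zeta_gen_in_ideal_gen:
  assumes "zeta_gen \<sigma> n \<in> ideal_gen S" "zeta_gen \<sigma> (Suc n) \<in> ideal_gen S" "n \<le> N"
  shows "zeta_gen \<sigma> N \<in> ideal_gen S"
  using \<open>n \<le> N\<close>
proof (induction N rule: less_induct)
  case (less N)
  have "N = n \<or> N = Suc n \<or> (\<exists>K. N = Suc (Suc K) \<and> n \<le> K)"
    using less.prems by presburger
  then consider "N = n" | "N = Suc n" | K where "N = Suc (Suc K)" "n \<le> K"
    by blast
  then show ?case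
  proof cases
    case 3
    have "(of_nat (K + 2) :: complex) \<noteq> 0"
      by (simp only: of_nat_eq_0_iff)
    then have "zeta_gen \<sigma> (K + 2) = monom (monom (1 / of_nat (K + 2)) 0) 0 *
        (monom (monom (of_nat (K + 2)) 0) 0 * zeta_gen \<sigma> (K + 2))"
      by (simp add: mult.assoc[symmetric] mult_monom monom_0 del: of_nat_add flip: one_pCons)
    also have "\<dots> = monom (monom (1 / of_nat (K + 2)) 0) 0 *
        (mon 1 0 * zeta_gen \<sigma> (K + 1) + monom (monom \<sigma> 0) 1 * zeta_gen \<sigma> K)"
      unfolding zeta_gen_recurrence ..
    finally show ?thesis
      using 3 less.IH by (simp add: ideal_gen_add ideal_gen_mult)
  qed (use assms in simp_all)
qed

lemma zeta_in_I0: "n \<le> N \<Longrightarrow> zeta N \<in> I0 n"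
  unfolding zeta_eq_zeta_gen I0_def
  by (rule zeta_gen_in_ideal_gen) (auto intro: ideal_gen_generator simp flip: zeta_eq_zeta_gen)

lemma zetabar_in_I0: "n < N \<Longrightarrow> zetabar N \<in> I0 n"
  unfolding zetabar_eq_zeta_gen I0_def
  by (rule zeta_gen_in_ideal_gen[of _ "Suc n"]) (auto intro: ideal_gen_generator simp flip: zetabar_eq_zeta_gen)

definition falling_fact :: "nat \<Rightarrow> 'a::comm_ring_1 \<Rightarrow> 'a" where
  "falling_fact i x = (\<Prod>t<i. x - of_nat t)"

lemma falling_fact_of_nat_mult_fact:
  "i \<le> L \<Longrightarrow> falling_fact i (of_nat L) * fact (L - i) = (fact L :: 'a::{comm_ring_1, semiring_char_0})"
proof (induction i)
  case 0
  then show ?case by (simp add: falling_fact_def)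
next
  case (Suc i)
  have "fact (L - i) = (of_nat L - of_nat i :: 'a) * fact (L - Suc i)"
    using Suc.prems by (simp add: fact_reduce of_nat_diff Suc_diff_Suc)
  with Suc show ?case
    by (simp add: falling_fact_def mult_ac)
qed

lemma falling_fact_of_nat_eq_0: "L < i \<Longrightarrow> falling_fact i (of_nat L :: 'a::comm_ring_1) = 0"
  unfolding falling_fact_def by (rule prod_zero) auto

lemma prod_linear_factors_falling_fact_expansion:
  fixes r :: "nat \<Rightarrow> 'a::comm_ring_1"
  shows "\<exists>C. (\<forall>x. (\<Prod>s<d. x - r s) = (\<Sum>i\<le>d. C i * falling_fact i x)) \<and> C d = 1 \<and> (\<forall>i>d. C i = 0)"
proof (induction d)
  case 0
  show ?case
    by (rule exI[of _ "\<lambda>i. if i = 0 then 1 else 0"]) (simp add: falling_fact_def)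
next
  case (Suc d)
  then obtain C where C: "\<And>x. (\<Prod>s<d. x - r s) = (\<Sum>i\<le>d. C i * falling_fact i x)"
    "C d = 1" "\<And>i. i > d \<Longrightarrow> C i = 0"
    by blast
  \<comment> \<open>\<open>(x - r d) * falling_fact i x = falling_fact (Suc i) x + (of_nat i - r d) * falling_fact i x\<close>\<close>
  define C' where "C' i = (if i = 0 then 0 else C (i - 1)) + (of_nat i - r d) * C i" for i
  have "(\<Prod>s<Suc d. x - r s) = (\<Sum>i\<le>Suc d. C' i * falling_fact i x)" for x
  proof -
    have "(\<Sum>i\<le>Suc d. C' i * falling_fact i x)
        = (\<Sum>i\<le>Suc d. (if i = 0 then 0 else C (i - 1)) * falling_fact i x)
          + (\<Sum>i\<le>Suc d. (of_nat i - r d) * C i * falling_fact i x)"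
      by (simp only: C'_def distrib_right sum.distrib)
    also have "(\<Sum>i\<le>Suc d. (if i = 0 then 0 else C (i - 1)) * falling_fact i x)
        = (\<Sum>i\<le>d. C i * falling_fact i x * (x - of_nat i))"
      by (subst sum.atMost_Suc_shift) (simp add: falling_fact_def mult.assoc)
    also have "(\<Sum>i\<le>Suc d. (of_nat i - r d) * C i * falling_fact i x)
        = (\<Sum>i\<le>d. (of_nat i - r d) * C i * falling_fact i x)"
      using C(3) by simp
    also have "(\<Sum>i\<le>d. C i * falling_fact i x * (x - of_nat i))
        + (\<Sum>i\<le>d. (of_nat i - r d) * C i * falling_fact i x)
        = (\<Sum>i\<le>d. C i * falling_fact i x) * (x - r d)"
      unfolding sum_distrib_right sum.distrib[symmetric] by (rule sum.cong) (auto simp: algebra_simps)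
    finally show ?thesis
      by (simp add: C(1))
  qed
  moreover have "C' (Suc d) = 1" "\<forall>i>Suc d. C' i = 0"
    using C by (simp_all add: C'_def)
  ultimately show ?case by blast
qed

lemma cf_monom_mult_zeta_gen:
  assumes "i \<le> M"
  shows "cf (monom (monom c i) 0 * zeta_gen \<sigma> (M - i)) x k =
    (if x + 2*k = M then c * \<sigma> ^ k * falling_fact i (of_nat x) / (fact x * fact k * 2 ^ k) else 0)"
proof (cases "i \<le> x")
  case True
  have "1 / fact (x - i) = falling_fact i (of_nat x) / (fact x :: complex)"
    using falling_fact_of_nat_mult_fact[OF True, where 'a = complex]
    by (simp add: field_simps)
  then have "c * \<sigma> ^ k / (fact (x - i) * fact k * 2 ^ k)
      = c * \<sigma> ^ k * falling_fact i (of_nat x) / (fact x * fact k * 2 ^ k)"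
    by (metis divide_divide_eq_left times_divide_eq_right mult.right_neutral)
  then show ?thesis
    using True assms by (auto simp: cf_monom_mult cf_zeta_gen)
next
  case False
  then show ?thesis
    by (simp add: cf_monom_mult falling_fact_of_nat_eq_0)
qed

lemma cf_sum_monom_mult_zeta_gen:
  assumes "m \<le> M"
  shows "cf (\<Sum>i\<le>m. monom (monom (c i) i) 0 * zeta_gen \<sigma> (M - i)) x k =
    (if x + 2*k = M then \<sigma> ^ k * (\<Sum>i\<le>m. c i * falling_fact i (of_nat x)) / (fact x * fact k * 2 ^ k)
     else 0)"
proof -
  have "cf (\<Sum>i\<le>m. monom (monom (c i) i) 0 * zeta_gen \<sigma> (M - i)) x k =
    (\<Sum>i\<le>m. if x + 2*k = M then c i * \<sigma> ^ k * falling_fact i (of_nat x) / (fact x * fact k * 2 ^ k) else 0)"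
    unfolding cf_sum using assms by (intro sum.cong) (simp_all add: cf_monom_mult_zeta_gen)
  then show ?thesis
    by (simp add: sum_divide_distrib sum_distrib_left mult_ac)
qed

lemma mono_gt_asym: "mono_gt a b \<Longrightarrow> \<not> mono_gt b a"
  by (cases a; cases b) (auto simp: mono_gt_def)

lemma lead_mono_eqI:
  assumes "m \<in> supp2 F" "\<And>m'. m' \<in> supp2 F \<Longrightarrow> m' \<noteq> m \<Longrightarrow> mono_gt m m'"
  shows "lead_mono F = m"
  unfolding lead_mono_def
proof (rule the_equality)
  fix m'
  assume m': "m' \<in> supp2 F \<and> (\<forall>m''\<in>supp2 F. m'' \<noteq> m' \<longrightarrow> mono_gt m' m'')"
  show "m' = m"
  proof (rule ccontr)
    assume "m' \<noteq> m"
    then have "mono_gt m' m" "mono_gt m m'"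
      using m' assms by auto
    then show False
      using mono_gt_asym by blast
  qed
qed (use assms in blast)

lemma lead_mono_homogeneous:
  assumes "cf F p j \<noteq> 0" "\<And>x k. cf F x k \<noteq> 0 \<Longrightarrow> x + 2*k = p + 2*j \<and> j \<le> k"
  shows "lead_mono F = (p, j)"
proof (rule lead_mono_eqI)
  show "(p, j) \<in> supp2 F"
    using assms(1) by (simp add: supp2_def)
next
  fix m' assume "m' \<in> supp2 F" "m' \<noteq> (p, j)"
  then obtain x k where "m' = (x, k)" "cf F x k \<noteq> 0" "k \<noteq> j \<or> x \<noteq> p"
    by (auto simp: supp2_def)
  then show "mono_gt (p, j) m'"
    using assms(2)[of x k] by (auto simp: mono_gt_def)
qed

lemma mon_lead_mono_in_lead_term_ideal:
  "F \<in> I \<Longrightarrow> F \<noteq> 0 \<Longrightarrow> mon (fst (lead_mono F)) (snd (lead_mono F)) \<in> lead_term_ideal I"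
  unfolding lead_term_ideal_def by (rule ideal_gen_generator) blast

lemma I0_contains_parity_combination:
  assumes "n \<le> M" and top: "A (M - n) = B (M - n)"
  shows "\<exists>F\<in>I0 n. \<forall>x k. cf F x k = (if x + 2*k = M then
      (\<Sum>i\<le>M - n. (if even k then A i else B i) * falling_fact i (of_nat x)) / (fact x * fact k * 2 ^ k)
      else 0)"
proof -
  define m where "m = M - n"
  \<comment> \<open>\<open>zetabar_in_I0\<close> needs \<open>N > n\<close>, so the coefficient \<open>b m\<close> of \<open>zetabar n\<close> must vanish.\<close>
  define a where "a i = (A i + B i) / 2" for i
  define b where "b i = (A i - B i) / 2" for i
  define F where "F = (\<Sum>i\<le>m. monom (monom (a i) i) 0 * zeta (M - i))
                    + (\<Sum>i\<le>m. monom (monom (b i) i) 0 * zetabar (M - i))"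
  have "monom (monom (a i) i) 0 * zeta (M - i) \<in> I0 n" if "i \<le> m" for i
    using that assms(1) unfolding I0_def m_def by (intro ideal_gen_mult zeta_in_I0[unfolded I0_def]) simp
  moreover have "monom (monom (b i) i) 0 * zetabar (M - i) \<in> I0 n" if "i \<le> m" for i
  proof (cases "i = m")
    case True
    then show ?thesis using top by (simp add: b_def m_def I0_def ideal_gen_zero)
  next
    case False
    then show ?thesis
      using that assms(1) unfolding I0_def m_def by (intro ideal_gen_mult zetabar_in_I0[unfolded I0_def]) simp
  qed
  ultimately have "F \<in> I0 n"
    unfolding F_def I0_def by (intro ideal_gen_add ideal_gen_sum) auto
  moreover have "cf F x k = (if x + 2*k = M then
      (\<Sum>i\<le>m. (if even k then A i else B i) * falling_fact i (of_nat x)) / (fact x * fact k * 2 ^ k)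
      else 0)" for x k
  proof -
    have "cf F x k = (if x + 2*k = M then
        ((\<Sum>i\<le>m. a i * falling_fact i (of_nat x)) + (-1) ^ k * (\<Sum>i\<le>m. b i * falling_fact i (of_nat x)))
        / (fact x * fact k * 2 ^ k) else 0)"
      using assms(1) unfolding F_def m_def zeta_eq_zeta_gen zetabar_eq_zeta_gen
      by (simp add: cf_sum_monom_mult_zeta_gen add_divide_distrib)
    also have "(\<Sum>i\<le>m. a i * falling_fact i (of_nat x)) + (-1) ^ k * (\<Sum>i\<le>m. b i * falling_fact i (of_nat x))
        = (\<Sum>i\<le>m. (a i + (-1) ^ k * b i) * falling_fact i (of_nat x))"
      by (simp add: sum_distrib_left sum.distrib algebra_simps)
    also have "(\<lambda>i. a i + (-1) ^ k * b i) = (\<lambda>i. if even k then A i else B i)"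
      by (auto simp: a_def b_def field_simps)
    finally show ?thesis .
  qed
  ultimately show ?thesis
    unfolding m_def by blast
qed

lemma I0_contains_root_products:
  fixes r :: "nat \<Rightarrow> nat \<Rightarrow> complex"
  assumes "n \<le> M" "d \<le> M - n"
  shows "\<exists>F\<in>I0 n. \<forall>x k. cf F x k = (if x + 2*k = M then
      (\<Prod>s<d. of_nat x - r (k mod 2) s) / (fact x * fact k * 2 ^ k) else 0)"
proof -
  obtain A where A: "\<And>x. (\<Prod>s<d. x - r 0 s) = (\<Sum>i\<le>d. A i * falling_fact i x)"
      "A d = 1" "\<And>i. i > d \<Longrightarrow> A i = 0"
    using prod_linear_factors_falling_fact_expansion by blast
  obtain B where B: "\<And>x. (\<Prod>s<d. x - r 1 s) = (\<Sum>i\<le>d. B i * falling_fact i x)"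
      "B d = 1" "\<And>i. i > d \<Longrightarrow> B i = 0"
    using prod_linear_factors_falling_fact_expansion by blast
  have "A (M - n) = B (M - n)"
    using assms(2) A(2,3) B(2,3) by (cases "d = M - n") simp_all
  then obtain F where "F \<in> I0 n" and cf_F: "\<And>x k. cf F x k = (if x + 2*k = M then
      (\<Sum>i\<le>M - n. (if even k then A i else B i) * falling_fact i (of_nat x)) / (fact x * fact k * 2 ^ k)
      else 0)"
    using I0_contains_parity_combination[OF assms(1)] by blast
  have sum_eq_prod: "(\<Sum>i\<le>M - n. (if even k then A i else B i) * falling_fact i x)
      = (\<Prod>s<d. x - r (k mod 2) s)" for k x
  proof -
    have "(\<Sum>i\<le>M - n. (if even k then A i else B i) * falling_fact i x)
        = (\<Sum>i\<le>d. (if even k then A i else B i) * falling_fact i x)"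
      using assms(2) A(3) B(3) by (intro sum.mono_neutral_right) auto
    moreover have "k mod 2 = (if even k then 0 else 1)"
      by presburger
    ultimately show ?thesis
      by (simp add: A(1) B(1)[unfolded One_nat_def])
  qed
  show ?thesis
    using \<open>F \<in> I0 n\<close> by (intro bexI[of _ F] allI) (simp only: cf_F sum_eq_prod)
qed

lemma mon_in_lead_term_ideal_I0:
  assumes "2*n \<le> 2*p + 3*j"
  shows "mon p j \<in> lead_term_ideal (I0 n)"
proof -
  define M where "M = p + 2*j"
  define d where "d = (j + 1) div 2"
  \<comment> \<open>\<open>root k\<close> runs through the \<open>M - 2t\<close> with \<open>t < j\<close>, \<open>t \<equiv> k mod 2\<close>; the padding \<open>M + 1\<close> is never an exponent.\<close>
  define root where "root k s = (if 2*s + k mod 2 < j then M - 2*(2*s + k mod 2) else M + 1)" for k s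
  have "n \<le> M" "d \<le> M - n"
    using assms unfolding M_def d_def by presburger+
  then obtain F where "F \<in> I0 n" and cf_F: "\<And>x k. cf F x k = (if x + 2*k = M then
      (\<Prod>s<d. of_nat x - of_nat (root (k mod 2) s)) / (fact x * fact k * 2 ^ k) else 0)"
    using I0_contains_root_products[of n M d "\<lambda>k s. of_nat (root k s)"] by blast
  have vanish: "cf F x k = 0" if "k < j" for x k
  proof -
    have "2 * (k div 2) + k mod 2 = k"
      by simp
    then have "root (k mod 2) (k div 2) = M - 2*k"
      using that by (simp add: root_def)
    moreover have "k div 2 < d"
      using that unfolding d_def by presburger
    ultimately show ?thesis
      by (auto simp: cf_F)
  qed
  have "p < root k s" for k s
    unfolding root_def M_def by auto
  then have "cf F p j \<noteq> 0"
    by (simp add: cf_F M_def less_not_refl3)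
  moreover have "x + 2*k = p + 2*j \<and> j \<le> k" if "cf F x k \<noteq> 0" for x k
  proof
    show "x + 2*k = p + 2*j"
      using that by (auto simp: cf_F M_def split: if_splits)
    show "j \<le> k"
      using that vanish[of k x] by (meson not_le)
  qed
  ultimately have "lead_mono F = (p, j)" "F \<noteq> 0"
    by (auto intro: lead_mono_homogeneous)
  then show ?thesis
    using mon_lead_mono_in_lead_term_ideal[OF \<open>F \<in> I0 n\<close>] by simp
qed

theorem proposition4p1:
  fixes n :: nat
  shows "\<forall>i j. 2*i + 3*j \<ge> 2*n \<longrightarrow> mon i j \<in> lead_term_ideal (I0 n)"
  using mon_in_lead_term_ideal_I0 by blast

end
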